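(* Let $C'\subseteq\{0,1\}^n$ be nonempty, $J\subseteq[n]$ with $|J|\leq n/2$, and let $Q\subseteq[n]$ be a $J$-discerning set, i.e. $d_{TV}(U(C')[Q],U_J(C')[Q])\geq 1/8$. If $X\sim U(C')$, then $H[X[Q\setminus J]\mid X[J]]\leq |Q\setminus J|-0.0005$.
   Context: $[n]=\{1,\dots,n\}$; for $x\in\{0,1\}^n$ and $J\subseteq[n]$, $x[J]=(x_j)_{j\in J}$. $U(C')$ is the uniform distribution on $C'$, $U(C')[Q]$ the distribution of $X[Q]$ for $X\sim U(C')$. $U_J(C')$ is obtained by drawing $x\sim U(C')$ and replacing $x[[n]\setminus J]$ by an independent uniformly random vector; $U_J(C')[Q]$ is its restriction to $Q$. $d_{TV}(p,q)=\frac12\sum_a|p(a)-q(a)|$. $H$ is Shannon entropy (base 2) and $H[X\mid Y]=\sum_y\Pr[Y=y]H[X\mid Y=y]$. *)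

theory Defs
  imports Complex_Main "HOL-Library.FuncSet"
begin

text \<open>Vectors x in {0,1}^n are functions nat => bool, with coordinates indexed by
[n] = {1..n}; coordinates outside [n] are fixed to False. The restriction x[J]
is the library function restrict x J (undefined outside J).\<close>

definition cube :: "nat \<Rightarrow> (nat \<Rightarrow> bool) set" where
  "cube n = {x. \<forall>i. i \<notin> {1..n} \<longrightarrow> \<not> x i}"

definition U_dist :: "(nat \<Rightarrow> bool) set \<Rightarrow> (nat \<Rightarrow> bool) \<Rightarrow> real" where
  "U_dist C y = (if y \<in> C then 1 / real (card C) else 0)"

text \<open>Probability mass function of U_J(C'): draw x from U(C'), keep x[J] and
replace the coordinates in [n] - J by independent uniform bits.\<close>
definition UJ_dist :: "nat \<Rightarrow> nat set \<Rightarrow> (nat \<Rightarrow> bool) set \<Rightarrow> (nat \<Rightarrow> bool) \<Rightarrow> real" where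
  "UJ_dist n J C y = (if y \<in> cube n then
      (\<Sum>x\<in>C. (if restrict x J = restrict y J then 1 else 0) / real (card C))
        * (1/2) ^ card ({1..n} - J)
     else 0)"

definition marg :: "nat \<Rightarrow> ((nat \<Rightarrow> bool) \<Rightarrow> real) \<Rightarrow> nat set \<Rightarrow> (nat \<Rightarrow> bool) \<Rightarrow> real" where
  "marg n p Q a = (\<Sum>y\<in>{y\<in>cube n. restrict y Q = a}. p y)"

definition d_TV :: "'a set \<Rightarrow> ('a \<Rightarrow> real) \<Rightarrow> ('a \<Rightarrow> real) \<Rightarrow> real" where
  "d_TV S p q = (1/2) * (\<Sum>a\<in>S. \<bar>p a - q a\<bar>)"

text \<open>Shannon entropy (base 2) of a distribution on a finite set S (0 log 0 = 0,
since ln 0 = 0 in Isabelle).\<close>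
definition entropy2 :: "'a set \<Rightarrow> ('a \<Rightarrow> real) \<Rightarrow> real" where
  "entropy2 S p = - (\<Sum>a\<in>S. p a * log 2 (p a))"

definition cond_entropy_U :: "(nat \<Rightarrow> bool) set \<Rightarrow> nat set \<Rightarrow> nat set \<Rightarrow> real" where
  "cond_entropy_U C Q' J =
     (\<Sum>b\<in>(\<lambda>x. restrict x J) ` C.
        (real (card {x\<in>C. restrict x J = b}) / real (card C)) *
        entropy2 ((\<lambda>x. restrict x Q') ` C)
          (\<lambda>a. real (card {x\<in>C. restrict x J = b \<and> restrict x Q' = a})
               / real (card {x\<in>C. restrict x J = b})))"

end

theory Submission
  imports Defs
begin

text \<open>Group the conditional entropy by the value b of X[J]: it is the average, with weights
  Pr[X[J] = b], of the entropies of the conditional laws p_b of X[Q - J] given X[J] = b. A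
  quantitative Gibbs inequality (tangent lines of p ln p on both sides of the uniform value) bounds
  each of these by |Q - J| - (2/11 d_TV(p_b, uniform) - 1/90) / ln 2. On the other side,
  U_J(C')[Q] is obtained from U(C')[Q] by replacing every p_b by the uniform distribution,
  so the J-discerning hypothesis forces the average of d_TV(p_b, uniform) to be at least 1/8,
  and 2/11 * 1/8 - 1/90 exceeds 0.0005 even before dividing by ln 2 < 1.\<close>

lemma restrict_eq_iff: "restrict y A = restrict z A \<longleftrightarrow> (\<forall>i\<in>A. y i = z i)"
  by (auto simp: restrict_def fun_eq_iff)

lemma restrict_eq_extensional_iff:
  "c \<in> extensional A \<Longrightarrow> restrict x A = c \<longleftrightarrow> (\<forall>i\<in>A. x i = c i)"
  by (auto simp: extensional_def restrict_def fun_eq_iff)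

lemma restrict_image_cube:
  assumes "I \<subseteq> {1..n}"
  shows "(\<lambda>y. restrict y I) ` cube n = I \<rightarrow>\<^sub>E UNIV"
proof
  show "I \<rightarrow>\<^sub>E UNIV \<subseteq> (\<lambda>y. restrict y I) ` cube n"
  proof
    fix f :: "nat \<Rightarrow> bool" assume f: "f \<in> I \<rightarrow>\<^sub>E UNIV"
    have "(\<lambda>i. i \<in> I \<and> f i) \<in> cube n" using assms by (auto simp: cube_def)
    moreover have "f = restrict (\<lambda>i. i \<in> I \<and> f i) I"
      using f by (auto simp: restrict_def PiE_def extensional_def)
    ultimately show "f \<in> (\<lambda>y. restrict y I) ` cube n" by blast
  qed
qed auto

lemma finite_cube: "finite (cube n)"
proof -
  have "inj_on (\<lambda>y. restrict y {1..n}) (cube n)"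
    by (rule inj_onI) (simp add: cube_def restrict_eq_iff fun_eq_iff, metis)
  moreover have "finite ((\<lambda>y. restrict y {1..n}) ` cube n)"
    by (simp add: restrict_image_cube finite_PiE)
  ultimately show ?thesis by (blast dest: finite_imageD)
qed

lemma card_cube_restrict_eq:
  assumes "c \<in> Q \<rightarrow>\<^sub>E UNIV" "x \<in> cube n" "Q \<subseteq> {1..n}" "J \<subseteq> {1..n}"
  shows "card {y \<in> cube n. restrict y Q = c \<and> restrict y J = restrict x J}
    = (if \<forall>i\<in>Q \<inter> J. x i = c i then 2 ^ card ({1..n} - (Q \<union> J)) else 0)"
proof (cases "\<forall>i\<in>Q \<inter> J. x i = c i")
  case False
  then have "{y \<in> cube n. restrict y Q = c \<and> restrict y J = restrict x J} = {}"
    using assms(1) by (auto simp: restrict_eq_extensional_iff restrict_eq_iff)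
  with False show ?thesis by (simp only: if_False card.empty)
next
  case agree: True
  define R where "R = {1..n} - (Q \<union> J)"
  define S where "S = {y \<in> cube n. restrict y Q = c \<and> restrict y J = restrict x J}"
  have S_iff: "y \<in> S \<longleftrightarrow> y \<in> cube n \<and> (\<forall>i\<in>Q. y i = c i) \<and> (\<forall>i\<in>J. y i = x i)" for y
    using assms(1) by (auto simp: S_def PiE_iff restrict_eq_extensional_iff restrict_eq_iff)
  have "bij_betw (\<lambda>y. restrict y R) S (R \<rightarrow>\<^sub>E UNIV)"
  proof (rule bij_betwI')
    fix y y' assume "y \<in> S" "y' \<in> S"
    then show "restrict y R = restrict y' R \<longleftrightarrow> y = y'"
      by (auto simp: S_iff restrict_eq_iff R_def cube_def fun_eq_iff)
  next
    fix f :: "nat \<Rightarrow> bool" assume f: "f \<in> R \<rightarrow>\<^sub>E UNIV"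
    define y where "y i = (if i \<in> Q then c i else if i \<in> J then x i else i \<in> R \<and> f i)" for i
    have "y \<in> S" using assms agree by (auto simp: S_iff y_def cube_def R_def)
    moreover have "f = restrict y R" using f
      by (auto simp: y_def R_def fun_eq_iff restrict_def PiE_def extensional_def)
    ultimately show "\<exists>y\<in>S. f = restrict y R" by blast
  qed auto
  then have "card S = card (R \<rightarrow>\<^sub>E (UNIV :: bool set))" by (rule bij_betw_same_card)
  then show ?thesis using agree by (simp add: S_def R_def card_PiE)
qed

lemma xlnx_ge_tangent:
  fixes p u s :: real
  assumes "0 < p" "0 < u" "0 < s"
  shows "p * ln u + p * ln s + p - s * u \<le> p * ln p"
proof -
  have "ln (s * u / p) \<le> s * u / p - 1" using assms by (intro ln_le_minus_one) simp
  also have "ln (s * u / p) = ln s + ln u - ln p" using assms by (simp add: ln_mult ln_div)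
  finally have "p * (ln s + ln u - ln p) \<le> p * (s * u / p - 1)"
    using assms by (intro mult_left_mono) auto
  then show ?thesis using assms by (simp add: algebra_simps)
qed

text \<open>Tangent lines of \<open>p \<mapsto> p ln p\<close> at \<open>11u/10\<close> and \<open>9u/10\<close>, with
  \<open>ln (11/10) \<ge> 1/11\<close> and \<open>ln (9/10) \<ge> -1/9\<close>.\<close>
lemma xlnx_ge_linear_plus_abs:
  fixes p u :: real
  assumes "0 \<le> p" "0 < u"
  shows "p * ln u + (p - u) + \<bar>p - u\<bar> / 11 - u / 90 \<le> p * ln p"
proof (cases "p = 0")
  case True
  then show ?thesis using assms by simp
next
  case False
  then have p: "0 < p" using assms by simp
  have "ln (10/11 :: real) \<le> 10/11 - 1" "ln (10/9 :: real) \<le> 10/9 - 1"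
    by (intro ln_le_minus_one; simp)+
  then have "1/11 \<le> ln (11/10 :: real)" "-1/9 \<le> ln (9/10 :: real)"
    by (simp_all add: ln_div)
  then have lower: "p * (1/11) \<le> p * ln (11/10)" "p * (-1/9) \<le> p * ln (9/10)"
    using p by (intro mult_left_mono; simp)+
  have tangent: "p * ln u + p * ln (11/10) + p - (11/10) * u \<le> p * ln p"
    "p * ln u + p * ln (9/10) + p - (9/10) * u \<le> p * ln p"
    using xlnx_ge_tangent[OF p assms(2), of "11/10"] xlnx_ge_tangent[OF p assms(2), of "9/10"]
    by simp_all
  show ?thesis
  proof (cases "u \<le> p")
    case True
    then have "\<bar>p - u\<bar> / 11 = p / 11 - u / 11" by simp
    with lower tangent assms(2) show ?thesis by linarith
  next
    case False
    then have "\<bar>p - u\<bar> / 11 = u / 11 - p / 11" by simp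
    with lower tangent assms(2) show ?thesis by linarith
  qed
qed

lemma sum_xlnx_ge_TV_uniform:
  fixes p :: "'a \<Rightarrow> real"
  assumes "finite A" "A \<noteq> {}" "\<And>a. a \<in> A \<Longrightarrow> 0 \<le> p a" "sum p A = 1"
  shows "- ln (card A) + (2/11) * d_TV A p (\<lambda>_. 1 / card A) - 1/90 \<le> (\<Sum>a\<in>A. p a * ln (p a))"
proof -
  define u where "u = 1 / real (card A)"
  have u: "0 < u" "real (card A) * u = 1" using assms by (simp_all add: u_def card_gt_0_iff)
  have "(\<Sum>a\<in>A. p a * ln u + (p a - u) + \<bar>p a - u\<bar> / 11 - u / 90) \<le> (\<Sum>a\<in>A. p a * ln (p a))"
    by (intro sum_mono xlnx_ge_linear_plus_abs assms u)
  also have "(\<Sum>a\<in>A. p a * ln u + (p a - u) + \<bar>p a - u\<bar> / 11 - u / 90)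
      = sum p A * ln u + (sum p A - real (card A) * u) + (\<Sum>a\<in>A. \<bar>p a - u\<bar>) / 11
        - real (card A) * u / 90"
    by (simp add: sum.distrib sum_subtractf sum_distrib_right sum_divide_distrib)
  also have "\<dots> = - ln (card A) + (2/11) * d_TV A p (\<lambda>_. 1 / card A) - 1/90"
    using assms(4) u(2) by (simp add: d_TV_def u_def ln_div)
  finally show ?thesis .
qed

lemma entropy2_le_log_card_minus_TV:
  fixes p :: "'a \<Rightarrow> real"
  assumes "finite A" "A \<noteq> {}" "\<And>a. a \<in> A \<Longrightarrow> 0 \<le> p a" "sum p A = 1"
  shows "entropy2 A p \<le> log 2 (card A) - ((2/11) * d_TV A p (\<lambda>_. 1 / card A) - 1/90) / ln 2"
proof -
  have "entropy2 A p = - (\<Sum>a\<in>A. p a * ln (p a)) / ln 2"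
    by (simp add: entropy2_def log_def sum_divide_distrib)
  also have "\<dots> \<le> (ln (card A) - ((2/11) * d_TV A p (\<lambda>_. 1 / card A) - 1/90)) / ln 2"
    using sum_xlnx_ge_TV_uniform[OF assms] by (intro divide_right_mono) auto
  finally show ?thesis by (simp add: log_def diff_divide_distrib)
qed

lemma entropy2_mono_neutral:
  assumes "finite A" "T \<subseteq> A" "\<And>a. a \<in> A - T \<Longrightarrow> p a = 0"
  shows "entropy2 T p = entropy2 A p"
proof -
  have "(\<Sum>a\<in>T. p a * log 2 (p a)) = (\<Sum>a\<in>A. p a * log 2 (p a))"
    using assms by (intro sum.mono_neutral_left) auto
  then show ?thesis by (simp add: entropy2_def)
qed

lemma sum_card_fibres:
  assumes "finite S" "finite T" "f ` S \<subseteq> T"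
  shows "(\<Sum>y\<in>T. real (card {x\<in>S. f x = y})) = real (card S)"
  using sum.group[OF assms, of "\<lambda>_. 1 :: real"] by simp

lemma card_filter_eq_sum_fibres:
  assumes "finite C"
  shows "real (card {x\<in>C. P x}) = (\<Sum>b\<in>f ` C. real (card {x\<in>C. f x = b \<and> P x}))"
proof -
  have fibre: "{x\<in>{x\<in>C. P x}. f x = b} = {x\<in>C. f x = b \<and> P x}" for b by blast
  have "(\<Sum>b\<in>f ` C. real (card {x\<in>{x\<in>C. P x}. f x = b})) = real (card {x\<in>C. P x})"
    using assms by (intro sum_card_fibres) auto
  then show ?thesis unfolding fibre by simp
qed

text \<open>For X uniform on C, prob_restrict C J b is Pr[X[J] = b] and cond_dist C J K b is the
  law of X[K] given X[J] = b.\<close>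

definition prob_restrict :: "('i \<Rightarrow> 'v) set \<Rightarrow> 'i set \<Rightarrow> ('i \<Rightarrow> 'v) \<Rightarrow> real" where
  "prob_restrict C J b = real (card {x\<in>C. restrict x J = b}) / real (card C)"

definition cond_dist :: "('i \<Rightarrow> 'v) set \<Rightarrow> 'i set \<Rightarrow> 'i set \<Rightarrow> ('i \<Rightarrow> 'v) \<Rightarrow> ('i \<Rightarrow> 'v) \<Rightarrow> real" where
  "cond_dist C J K b a = real (card {x\<in>C. restrict x J = b \<and> restrict x K = a})
      / real (card {x\<in>C. restrict x J = b})"

lemma cond_entropy_U_eq_sum_cond_dist:
  "cond_entropy_U C K J = (\<Sum>b\<in>(\<lambda>x. restrict x J) ` C.
      prob_restrict C J b * entropy2 ((\<lambda>x. restrict x K) ` C) (cond_dist C J K b))"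
  unfolding cond_entropy_U_def prob_restrict_def cond_dist_def[abs_def] by simp

lemma sum_prob_restrict:
  assumes "finite C" "C \<noteq> {}"
  shows "(\<Sum>b\<in>(\<lambda>x. restrict x J) ` C. prob_restrict C J b) = 1"
proof -
  have "(\<Sum>b\<in>(\<lambda>x. restrict x J) ` C. real (card {x\<in>C. restrict x J = b})) = real (card C)"
    using card_filter_eq_sum_fibres[OF assms(1), of "\<lambda>_. True" "\<lambda>x. restrict x J"] by simp
  then show ?thesis
    using assms by (simp add: prob_restrict_def card_gt_0_iff flip: sum_divide_distrib)
qed

lemma card_fibre_pos:
  assumes "finite C" "b \<in> (\<lambda>x. restrict x J) ` C"
  shows "0 < card {x\<in>C. restrict x J = b}"
  using assms by (auto simp: card_gt_0_iff)

lemma sum_cond_dist: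
  assumes "finite C" "b \<in> (\<lambda>x. restrict x J) ` C" "finite A" "(\<lambda>x. restrict x K) ` C \<subseteq> A"
  shows "sum (cond_dist C J K b) A = 1"
proof -
  have fibre: "{x\<in>{x\<in>C. restrict x J = b}. restrict x K = a}
      = {x\<in>C. restrict x J = b \<and> restrict x K = a}" for a by blast
  have "(\<Sum>a\<in>A. real (card {x\<in>{x\<in>C. restrict x J = b}. restrict x K = a}))
      = real (card {x\<in>C. restrict x J = b})"
    using assms by (intro sum_card_fibres) auto
  then show ?thesis using card_fibre_pos[OF assms(1,2)]
    unfolding fibre by (simp add: cond_dist_def flip: sum_divide_distrib)
qed

lemma prob_restrict_mult_cond_dist:
  assumes "finite C" "b \<in> (\<lambda>x. restrict x J) ` C"
  shows "prob_restrict C J b * cond_dist C J K b a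
    = real (card {x\<in>C. restrict x J = b \<and> restrict x K = a}) / real (card C)"
  using card_fibre_pos[OF assms] by (simp add: prob_restrict_def cond_dist_def)

lemma entropy2_cond_dist_le:
  assumes "C \<subseteq> cube n" "K \<subseteq> {1..n}" "b \<in> (\<lambda>x. restrict x J) ` C"
  shows "entropy2 ((\<lambda>x. restrict x K) ` C) (cond_dist C J K b)
    \<le> card K - ((2/11) * d_TV (K \<rightarrow>\<^sub>E UNIV) (cond_dist C J K b) (\<lambda>_. 1 / 2 ^ card K) - 1/90) / ln 2"
proof -
  let ?A = "K \<rightarrow>\<^sub>E (UNIV :: bool set)"
  have finC: "finite C" using assms(1) finite_cube finite_subset by blast
  have finA: "finite ?A" and cardA: "card ?A = 2 ^ card K"
    using finite_subset[OF assms(2)] by (simp_all add: finite_PiE card_PiE)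
  have image_sub: "(\<lambda>x. restrict x K) ` C \<subseteq> ?A"
    using image_mono[OF assms(1), of "\<lambda>x. restrict x K"] restrict_image_cube[OF assms(2)] by simp
  have "entropy2 ((\<lambda>x. restrict x K) ` C) (cond_dist C J K b) = entropy2 ?A (cond_dist C J K b)"
  proof (rule entropy2_mono_neutral[OF finA image_sub])
    fix a assume "a \<in> ?A - (\<lambda>x. restrict x K) ` C"
    then have "{x\<in>C. restrict x J = b \<and> restrict x K = a} = {}" by blast
    then show "cond_dist C J K b a = 0" unfolding cond_dist_def by (simp only: card.empty)
  qed
  also have "\<dots> \<le> log 2 (card ?A) - ((2/11) * d_TV ?A (cond_dist C J K b) (\<lambda>_. 1 / card ?A) - 1/90) / ln 2"
  proof (rule entropy2_le_log_card_minus_TV[OF finA])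
    show "?A \<noteq> {}" by (simp add: PiE_eq_empty_iff)
    show "0 \<le> cond_dist C J K b a" for a by (simp add: cond_dist_def)
  qed (rule sum_cond_dist[OF finC assms(3) finA image_sub])
  finally have bound: "entropy2 ((\<lambda>x. restrict x K) ` C) (cond_dist C J K b)
    \<le> log 2 (card ?A) - ((2/11) * d_TV ?A (cond_dist C J K b) (\<lambda>_. 1 / card ?A) - 1/90) / ln 2" .
  have "real (card ?A) = 2 ^ card K" "log 2 (2 ^ card K) = real (card K)"
    by (simp_all add: cardA)
  with bound show ?thesis by (simp only:)
qed

lemma cond_entropy_U_le_card_minus_TV:
  assumes "C \<subseteq> cube n" "C \<noteq> {}" "K \<subseteq> {1..n}"
  shows "cond_entropy_U C K J \<le> card K - ((2/11) * (\<Sum>b\<in>(\<lambda>x. restrict x J) ` C.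
      prob_restrict C J b * d_TV (K \<rightarrow>\<^sub>E UNIV) (cond_dist C J K b) (\<lambda>_. 1 / 2 ^ card K)) - 1/90) / ln 2"
proof -
  define B where "B = (\<lambda>x. restrict x J) ` C"
  define tv where "tv b = d_TV (K \<rightarrow>\<^sub>E UNIV) (cond_dist C J K b) (\<lambda>_. 1 / 2 ^ card K)" for b
  have finC: "finite C" using assms(1) finite_cube finite_subset by blast
  have sum_B: "sum (prob_restrict C J) B = 1"
    unfolding B_def by (rule sum_prob_restrict[OF finC assms(2)])
  then have sum_B_card: "(\<Sum>b\<in>B. real (card K) * prob_restrict C J b) = card K"
    by (simp flip: sum_distrib_left)
  have "cond_entropy_U C K J
      = (\<Sum>b\<in>B. prob_restrict C J b * entropy2 ((\<lambda>x. restrict x K) ` C) (cond_dist C J K b))"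
    unfolding B_def by (rule cond_entropy_U_eq_sum_cond_dist)
  also have "\<dots> \<le> (\<Sum>b\<in>B. prob_restrict C J b * (card K - ((2/11) * tv b - 1/90) / ln 2))"
    unfolding tv_def B_def
    by (intro sum_mono mult_left_mono entropy2_cond_dist_le[OF assms(1,3)])
      (simp_all add: prob_restrict_def)
  also have "\<dots> = card K - ((2/11) * (\<Sum>b\<in>B. prob_restrict C J b * tv b) - 1/90) / ln 2"
    using sum_B sum_B_card
    by (simp add: algebra_simps sum_subtractf sum.distrib sum_distrib_left
        diff_divide_distrib flip: sum_divide_distrib)
  finally show ?thesis unfolding B_def tv_def .
qed

lemma marg_U_dist:
  assumes "C \<subseteq> cube n"
  shows "marg n (U_dist C) Q c = real (card {x\<in>C. restrict x Q = c}) / real (card C)"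
proof -
  have "marg n (U_dist C) Q c = (\<Sum>y\<in>{y\<in>cube n. restrict y Q = c}. if y \<in> C then 1 / real (card C) else 0)"
    by (simp add: marg_def U_dist_def)
  also have "\<dots> = (\<Sum>y\<in>{y\<in>{y\<in>cube n. restrict y Q = c}. y \<in> C}. 1 / real (card C))"
    by (rule sum.inter_filter[symmetric]) (simp add: finite_cube)
  also have "{y\<in>{y\<in>cube n. restrict y Q = c}. y \<in> C} = {x\<in>C. restrict x Q = c}"
    using assms by blast
  finally show ?thesis by simp
qed

lemma marg_UJ_dist:
  assumes "C \<subseteq> cube n" "J \<subseteq> {1..n}" "Q \<subseteq> {1..n}" "c \<in> Q \<rightarrow>\<^sub>E UNIV"
  shows "marg n (UJ_dist n J C) Q c
    = real (card {x\<in>C. \<forall>i\<in>Q \<inter> J. x i = c i}) / real (card C) / 2 ^ card (Q - J)"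
proof -
  define Y where "Y = {y\<in>cube n. restrict y Q = c}"
  define r where "r = card ({1..n} - (Q \<union> J))"
  define w :: real where "w = (1/2) ^ card ({1..n} - J) / real (card C)"
  have finC: "finite C" using assms(1) finite_cube finite_subset by blast
  have split: "{1..n} - J = ({1..n} - (Q \<union> J)) \<union> (Q - J)" using assms(3) by blast
  have "card ({1..n} - J) = r + card (Q - J)"
    unfolding r_def split using finite_subset[OF assms(3)] by (intro card_Un_disjoint) auto
  then have weight: "2 ^ r * w = 1 / real (card C) / 2 ^ card (Q - J)"
    by (simp add: w_def power_add power_one_over)
  have "marg n (UJ_dist n J C) Q c = (\<Sum>y\<in>Y. \<Sum>x\<in>C. if restrict x J = restrict y J then w else 0)"
    unfolding marg_def Y_def[symmetric]
    by (intro sum.cong refl) (auto simp: UJ_dist_def Y_def w_def sum_distrib_right intro!: sum.cong)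
  also have "\<dots> = (\<Sum>x\<in>C. real (card {y\<in>Y. restrict x J = restrict y J}) * w)"
    using finite_cube by (subst sum.swap) (simp add: Y_def flip: sum.inter_filter)
  also have "\<dots> = (\<Sum>x\<in>C. if \<forall>i\<in>Q \<inter> J. x i = c i then 2 ^ r * w else 0)"
  proof (intro sum.cong refl)
    fix x assume "x \<in> C"
    have "{y\<in>Y. restrict x J = restrict y J} = {y\<in>cube n. restrict y Q = c \<and> restrict y J = restrict x J}"
      by (auto simp: Y_def)
    then show "real (card {y\<in>Y. restrict x J = restrict y J}) * w
        = (if \<forall>i\<in>Q \<inter> J. x i = c i then 2 ^ r * w else 0)"
      using assms \<open>x \<in> C\<close> by (simp add: card_cube_restrict_eq r_def subsetD)
  qed
  also have "\<dots> = real (card {x\<in>C. \<forall>i\<in>Q \<inter> J. x i = c i}) / real (card C) / 2 ^ card (Q - J)"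
    using finC by (simp add: weight flip: sum.inter_filter)
  finally show ?thesis .
qed

lemma card_fibre_restrict_eq:
  assumes "c \<in> extensional Q"
  shows "card {x\<in>C. restrict x J = b \<and> restrict x Q = c}
    = (if \<forall>i\<in>Q \<inter> J. b i = c i
       then card {x\<in>C. restrict x J = b \<and> restrict x (Q - J) = restrict c (Q - J)} else 0)"
proof -
  have "restrict x Q = c \<longleftrightarrow> (\<forall>i\<in>Q \<inter> J. b i = c i) \<and> restrict x (Q - J) = restrict c (Q - J)"
    if "restrict x J = b" for x
    using that assms by (auto simp: restrict_eq_extensional_iff restrict_eq_iff)
  then have fibre: "{x\<in>C. restrict x J = b \<and> restrict x Q = c}
      = {x\<in>C. restrict x J = b \<and> (\<forall>i\<in>Q \<inter> J. b i = c i) \<and> restrict x (Q - J) = restrict c (Q - J)}"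
    by blast
  show ?thesis
  proof (cases "\<forall>i\<in>Q \<inter> J. b i = c i")
    case False
    then have empty: "{x\<in>C. restrict x J = b \<and> restrict x Q = c} = {}" unfolding fibre by blast
    show ?thesis unfolding if_not_P[OF False] empty by simp
  qed (simp add: fibre)
qed

lemma card_fibre_agreeing:
  "card {x\<in>C. restrict x J = b \<and> (\<forall>i\<in>Q \<inter> J. x i = c i)}
    = (if \<forall>i\<in>Q \<inter> J. b i = c i then card {x\<in>C. restrict x J = b} else 0)"
proof -
  have "(\<forall>i\<in>Q \<inter> J. x i = c i) \<longleftrightarrow> (\<forall>i\<in>Q \<inter> J. b i = c i)" if "restrict x J = b" for x
    using that by auto
  then have fibre: "{x\<in>C. restrict x J = b \<and> (\<forall>i\<in>Q \<inter> J. x i = c i)}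
      = {x\<in>C. restrict x J = b \<and> (\<forall>i\<in>Q \<inter> J. b i = c i)}"
    by blast
  show ?thesis
  proof (cases "\<forall>i\<in>Q \<inter> J. b i = c i")
    case False
    then have empty: "{x\<in>C. restrict x J = b \<and> (\<forall>i\<in>Q \<inter> J. x i = c i)} = {}" unfolding fibre by blast
    show ?thesis unfolding if_not_P[OF False] empty by simp
  qed (simp add: fibre)
qed

lemma marg_U_dist_minus_marg_UJ_dist:
  assumes "C \<subseteq> cube n" "J \<subseteq> {1..n}" "Q \<subseteq> {1..n}" "c \<in> Q \<rightarrow>\<^sub>E UNIV"
  shows "marg n (U_dist C) Q c - marg n (UJ_dist n J C) Q c
    = (\<Sum>b\<in>(\<lambda>x. restrict x J) ` C. if \<forall>i\<in>Q \<inter> J. b i = c i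
        then prob_restrict C J b * (cond_dist C J (Q - J) b (restrict c (Q - J)) - 1 / 2 ^ card (Q - J))
        else 0)"
proof -
  define B where "B = (\<lambda>x. restrict x J) ` C"
  have finC: "finite C" using assms(1) finite_cube finite_subset by blast
  have ext: "c \<in> extensional Q" using assms(4) by (simp add: PiE_iff)
  have "marg n (U_dist C) Q c = (\<Sum>b\<in>B. real (card {x\<in>C. restrict x J = b \<and> restrict x Q = c})) / card C"
    unfolding marg_U_dist[OF assms(1)] B_def
      card_filter_eq_sum_fibres[OF finC, of "\<lambda>x. restrict x Q = c" "\<lambda>x. restrict x J"] ..
  also have "\<dots> = (\<Sum>b\<in>B. if \<forall>i\<in>Q \<inter> J. b i = c i
      then prob_restrict C J b * cond_dist C J (Q - J) b (restrict c (Q - J)) else 0)"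
    unfolding sum_divide_distrib
    by (intro sum.cong refl) (simp add: B_def card_fibre_restrict_eq[OF ext] prob_restrict_mult_cond_dist[OF finC])
  finally have U: "marg n (U_dist C) Q c = \<dots>" .
  have "marg n (UJ_dist n J C) Q c
      = (\<Sum>b\<in>B. real (card {x\<in>C. restrict x J = b \<and> (\<forall>i\<in>Q \<inter> J. x i = c i)})) / card C / 2 ^ card (Q - J)"
    unfolding marg_UJ_dist[OF assms] B_def
      card_filter_eq_sum_fibres[OF finC, of "\<lambda>x. \<forall>i\<in>Q \<inter> J. x i = c i" "\<lambda>x. restrict x J"] ..
  also have "\<dots> = (\<Sum>b\<in>B. if \<forall>i\<in>Q \<inter> J. b i = c i then prob_restrict C J b / 2 ^ card (Q - J) else 0)"
    unfolding sum_divide_distrib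
    by (intro sum.cong refl) (simp add: card_fibre_agreeing prob_restrict_def)
  finally have UJ: "marg n (UJ_dist n J C) Q c = \<dots>" .
  show ?thesis
    unfolding U UJ B_def[symmetric] sum_subtractf[symmetric]
    by (intro sum.cong refl) (simp add: right_diff_distrib)
qed

lemma sum_PiE_agreeing_le:
  fixes g :: "('a \<Rightarrow> 'b::finite) \<Rightarrow> real" and b :: "'a \<Rightarrow> 'b"
  assumes "finite Q" "\<And>a. 0 \<le> g a"
  shows "(\<Sum>c\<in>Q \<rightarrow>\<^sub>E UNIV. if \<forall>i\<in>Q \<inter> J. b i = c i then g (restrict c (Q - J)) else 0)
    \<le> (\<Sum>a\<in>(Q - J) \<rightarrow>\<^sub>E UNIV. g a)"
proof -
  define D where "D = {c \<in> Q \<rightarrow>\<^sub>E UNIV. \<forall>i\<in>Q \<inter> J. b i = c i}"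
  have "inj_on (\<lambda>c. restrict c (Q - J)) D"
  proof (rule inj_onI)
    fix c c' assume "c \<in> D" "c' \<in> D" "restrict c (Q - J) = restrict c' (Q - J)"
    then show "c = c'"
      unfolding D_def restrict_eq_iff by (intro PiE_ext[of c Q "\<lambda>_. UNIV"]) auto
  qed
  then have "(\<Sum>c\<in>Q \<rightarrow>\<^sub>E UNIV. if \<forall>i\<in>Q \<inter> J. b i = c i then g (restrict c (Q - J)) else 0)
      = (\<Sum>a\<in>(\<lambda>c. restrict c (Q - J)) ` D. g a)"
    using assms(1) by (simp add: D_def sum.reindex finite_PiE flip: sum.inter_filter)
  also have "\<dots> \<le> (\<Sum>a\<in>(Q - J) \<rightarrow>\<^sub>E UNIV. g a)"
    using assms by (intro sum_mono2) (auto simp: D_def finite_PiE)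
  finally show ?thesis .
qed

lemma d_TV_marg_le_sum_d_TV_cond_dist:
  assumes "C \<subseteq> cube n" "J \<subseteq> {1..n}" "Q \<subseteq> {1..n}"
  shows "d_TV (Q \<rightarrow>\<^sub>E UNIV) (marg n (U_dist C) Q) (marg n (UJ_dist n J C) Q)
    \<le> (\<Sum>b\<in>(\<lambda>x. restrict x J) ` C. prob_restrict C J b *
          d_TV ((Q - J) \<rightarrow>\<^sub>E UNIV) (cond_dist C J (Q - J) b) (\<lambda>_. 1 / 2 ^ card (Q - J)))"
proof -
  define B where "B = (\<lambda>x. restrict x J) ` C"
  define dev where "dev b a = \<bar>cond_dist C J (Q - J) b a - 1 / 2 ^ card (Q - J)\<bar>" for b a
  have finQ: "finite Q" using assms(3) finite_subset by blast
  have "(\<Sum>c\<in>Q \<rightarrow>\<^sub>E UNIV. \<bar>marg n (U_dist C) Q c - marg n (UJ_dist n J C) Q c\<bar>)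
      \<le> (\<Sum>c\<in>Q \<rightarrow>\<^sub>E UNIV. \<Sum>b\<in>B. prob_restrict C J b *
            (if \<forall>i\<in>Q \<inter> J. b i = c i then dev b (restrict c (Q - J)) else 0))"
  proof (intro sum_mono)
    fix c :: "nat \<Rightarrow> bool" assume "c \<in> Q \<rightarrow>\<^sub>E UNIV"
    show "\<bar>marg n (U_dist C) Q c - marg n (UJ_dist n J C) Q c\<bar>
        \<le> (\<Sum>b\<in>B. prob_restrict C J b * (if \<forall>i\<in>Q \<inter> J. b i = c i then dev b (restrict c (Q - J)) else 0))"
      unfolding marg_U_dist_minus_marg_UJ_dist[OF assms \<open>c \<in> Q \<rightarrow>\<^sub>E UNIV\<close>] B_def
      by (rule order_trans[OF sum_abs], intro sum_mono) (simp add: dev_def abs_mult prob_restrict_def)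
  qed
  also have "\<dots> = (\<Sum>b\<in>B. prob_restrict C J b *
      (\<Sum>c\<in>Q \<rightarrow>\<^sub>E UNIV. if \<forall>i\<in>Q \<inter> J. b i = c i then dev b (restrict c (Q - J)) else 0))"
    by (subst sum.swap) (simp add: sum_distrib_left)
  also have "\<dots> \<le> (\<Sum>b\<in>B. prob_restrict C J b * (\<Sum>a\<in>(Q - J) \<rightarrow>\<^sub>E UNIV. dev b a))"
    by (intro sum_mono mult_left_mono sum_PiE_agreeing_le finQ) (simp_all add: dev_def prob_restrict_def)
  finally have "(1/2) * (\<Sum>c\<in>Q \<rightarrow>\<^sub>E UNIV. \<bar>marg n (U_dist C) Q c - marg n (UJ_dist n J C) Q c\<bar>)
      \<le> (1/2) * (\<Sum>b\<in>B. prob_restrict C J b * (\<Sum>a\<in>(Q - J) \<rightarrow>\<^sub>E UNIV. dev b a))"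
    by simp
  also have "\<dots> = (\<Sum>b\<in>B. prob_restrict C J b *
      d_TV ((Q - J) \<rightarrow>\<^sub>E UNIV) (cond_dist C J (Q - J) b) (\<lambda>_. 1 / 2 ^ card (Q - J)))"
    by (simp add: d_TV_def dev_def sum_distrib_left)
  finally show ?thesis unfolding B_def d_TV_def[of "Q \<rightarrow>\<^sub>E UNIV"] .
qed

theorem lemma10:
  fixes n :: nat and C :: "(nat \<Rightarrow> bool) set" and J Q :: "nat set"
  assumes "C \<subseteq> cube n" and "C \<noteq> {}"
    and "J \<subseteq> {1..n}" and "real (card J) \<le> real n / 2"
    and "Q \<subseteq> {1..n}"
    and "d_TV ((\<lambda>y. restrict y Q) ` cube n)
           (marg n (U_dist C) Q) (marg n (UJ_dist n J C) Q) \<ge> 1/8"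
  shows "cond_entropy_U C (Q - J) J \<le> real (card (Q - J)) - 0.0005"
proof -
  define K where "K = Q - J"
  define T where "T = (\<Sum>b\<in>(\<lambda>x. restrict x J) ` C.
    prob_restrict C J b * d_TV (K \<rightarrow>\<^sub>E UNIV) (cond_dist C J K b) (\<lambda>_. 1 / 2 ^ card K))"
  have "1/8 \<le> T"
    using assms(6) d_TV_marg_le_sum_d_TV_cond_dist[OF assms(1,3,5)]
    by (simp add: restrict_image_cube[OF assms(5)] T_def K_def)
  then have "0.0005 \<le> (2/11) * T - 1/90" by simp
  moreover have "0 < ln (2 :: real)" "ln (2 :: real) < 1" using ln_2_less_1 by simp_all
  ultimately have "0.0005 \<le> ((2/11) * T - 1/90) / ln 2" by (simp add: le_divide_eq)
  moreover have "cond_entropy_U C K J \<le> card K - ((2/11) * T - 1/90) / ln 2"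
    unfolding T_def using assms(1,2,5)
    by (intro cond_entropy_U_le_card_minus_TV) (auto simp: K_def)
  ultimately show ?thesis unfolding K_def by linarith
qed

end
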